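(* Let $(X,d)$ be a metric space and $\mu$ a non-atomic Borel measure on $X$. For every path $\gamma:[a,b]\to X$ in $\Gamma^\mu$, the function $\nu_\gamma$ is strictly increasing, continuous, maps $[a,b]$ onto $[0,h(\gamma)]$, and for every $x\in[a,b]$, $h(\gamma)=h(\gamma|_{[a,x]})+h(\gamma|_{[x,b]})$.
   Context: A path is a continuous map $\gamma:[a,b]\to X$; a subpath is a restriction to a subinterval, trivial if that interval is a point; $\mathrm{Im}(\gamma)=\gamma([a,b])$. $\mu$ non-atomic: $\mu(\{x\})=0$ for all $x$. $\Gamma^\mu$ is the set of all non-trivial injective paths $\gamma$ with $0<\mu(\mathrm{Im}(\tilde\gamma))<\infty$ for every non-trivial subpath $\tilde\gamma$. For any path $\eta$ (including subpaths), $h(\eta)=\mu(\mathrm{Im}(\eta))$; for $\gamma:[a,b]\to X$ in $\Gamma^\mu$, $\nu_\gamma:[a,b]\to\mathbb R$, $\nu_\gamma(x)=h(\gamma|_{[a,x]})$. *)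

theory Defs
  imports "HOL-Analysis.Analysis"
begin

text \<open>A path is a continuous map gamma restricted to the interval {a..b}; the
  subpath on {c..d} is gamma restricted to {c..d}; its image is gamma ` {c..d}.\<close>

definition non_atomic :: "'a measure \<Rightarrow> bool" where
  "non_atomic \<mu> \<longleftrightarrow> (\<forall>x. emeasure \<mu> {x} = 0)"

definition h_path :: "'a measure \<Rightarrow> (real \<Rightarrow> 'a) \<Rightarrow> real \<Rightarrow> real \<Rightarrow> real" where
  "h_path \<mu> \<gamma> c d = measure \<mu> (\<gamma> ` {c..d})"

definition in_Gamma :: "'a::topological_space measure \<Rightarrow> (real \<Rightarrow> 'a) \<Rightarrow> real \<Rightarrow> real \<Rightarrow> bool" where
  "in_Gamma \<mu> \<gamma> a b \<longleftrightarrow>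
     a < b \<and> continuous_on {a..b} \<gamma> \<and> inj_on \<gamma> {a..b} \<and>
     (\<forall>c d. a \<le> c \<and> c < d \<and> d \<le> b \<longrightarrow>
        0 < emeasure \<mu> (\<gamma> ` {c..d}) \<and> emeasure \<mu> (\<gamma> ` {c..d}) < \<infinity>)"

definition nu_path :: "'a measure \<Rightarrow> (real \<Rightarrow> 'a) \<Rightarrow> real \<Rightarrow> real \<Rightarrow> real" where
  "nu_path \<mu> \<gamma> a x = h_path \<mu> \<gamma> a x"

end

theory Submission
  imports Defs
begin

text \<open>Injectivity makes the images of \<open>\<gamma>\<close> on \<open>[c,x]\<close> and \<open>[x,d]\<close> meet only in the null
  point \<open>\<gamma> x\<close>, so \<open>h\<close> is additive along the path, and positivity of \<open>h\<close> on non-trivial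
  subpaths makes \<open>\<nu>\<close> strictly increasing. For continuity, \<open>\<bar>\<nu> y - \<nu> x\<bar>\<close> is bounded by the
  measure of the image of \<open>[a,b] \<inter> [x - r, x + r]\<close> with \<open>r = \<bar>y - x\<bar>\<close>; these images decrease
  to \<open>{\<gamma> x}\<close> as \<open>r \<rightarrow> 0\<close>, so their measures tend to \<open>0\<close> by continuity of \<open>\<mu>\<close> from
  above. The intermediate value theorem then gives \<open>\<nu> ` [a,b] = [0, h \<gamma>]\<close>.\<close>

lemma non_atomic_measure_singleton: "non_atomic \<mu> \<Longrightarrow> measure \<mu> {x} = 0"
  by (simp add: non_atomic_def measure_def)

lemma continuous_image_compact_in_sets_borel:
  fixes \<gamma> :: "'b::topological_space \<Rightarrow> 'a::t2_space"
  assumes "sets \<mu> = sets borel" "compact K" "continuous_on K \<gamma>"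
  shows "\<gamma> ` K \<in> sets \<mu>"
  using compact_continuous_image[OF assms(3,2)] by (simp add: assms(1) borel_closed compact_imp_closed)

lemma continuous_image_compact_fmeasurable:
  fixes \<gamma> :: "'b::topological_space \<Rightarrow> 'a::t2_space"
  assumes "sets \<mu> = sets borel" "continuous_on S \<gamma>" "\<gamma> ` S \<in> fmeasurable \<mu>"
    and "compact K" "K \<subseteq> S"
  shows "\<gamma> ` K \<in> fmeasurable \<mu>"
proof (rule fmeasurableI2[OF assms(3)])
  show "\<gamma> ` K \<subseteq> \<gamma> ` S"
    using assms(5) by (rule image_mono)
  show "\<gamma> ` K \<in> sets \<mu>"
    using assms(1,4) continuous_on_subset[OF assms(2,5)] by (rule continuous_image_compact_in_sets_borel)
qed

lemma continuous_mono_on_image_Icc: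
  fixes f :: "'a::linear_continuum_topology \<Rightarrow> 'b::linorder_topology"
  assumes "a \<le> b" "continuous_on {a..b} f" "mono_on {a..b} f"
  shows "f ` {a..b} = {f a..f b}"
proof
  show "f ` {a..b} \<subseteq> {f a..f b}"
    using assms(1) by (auto intro!: mono_onD[OF assms(3)])
  show "{f a..f b} \<subseteq> f ` {a..b}"
    using IVT'[of f a _ b] assms(1,2) by force
qed

lemma measure_image_interval_split:
  fixes \<gamma> :: "real \<Rightarrow> 'a"
  assumes "inj_on \<gamma> {c..d}" "x \<in> {c..d}"
    and "\<gamma> ` {c..x} \<in> fmeasurable \<mu>" "\<gamma> ` {x..d} \<in> fmeasurable \<mu>" "measure \<mu> {\<gamma> x} = 0"
  shows "measure \<mu> (\<gamma> ` {c..d}) = measure \<mu> (\<gamma> ` {c..x}) + measure \<mu> (\<gamma> ` {x..d})"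
proof -
  have "\<gamma> ` {c..d} = \<gamma> ` {c..x} \<union> \<gamma> ` {x..d}"
    using assms(2) by (metis atLeastAtMost_iff ivl_disj_un_two_touch(4) image_Un)
  moreover have "\<gamma> ` {c..x} \<inter> \<gamma> ` {x..d} = \<gamma> ` ({c..x} \<inter> {x..d})"
    using assms(1,2) by (intro inj_on_image_Int[symmetric]) (auto elim: inj_on_subset)
  moreover have "{c..x} \<inter> {x..d} = {x}"
    using assms(2) by auto
  ultimately show ?thesis
    using measure_Un3[OF assms(3,4)] assms(5) by simp
qed

lemma tendsto_measure_image_cball:
  fixes \<gamma> :: "'b::metric_space \<Rightarrow> 'a::metric_space"
  assumes borel: "sets \<mu> = sets borel" and "non_atomic \<mu>"
    and S: "compact S" "continuous_on S \<gamma>" "inj_on \<gamma> S" "emeasure \<mu> (\<gamma> ` S) < \<infinity>"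
    and "x \<in> S"
  shows "((\<lambda>r. measure \<mu> (\<gamma> ` (S \<inter> cball x r))) \<longlongrightarrow> 0) (at_right 0)"
proof -
  have "\<gamma> ` S \<in> fmeasurable \<mu>"
    using S by (intro fmeasurableI continuous_image_compact_in_sets_borel[OF borel])
  then have fmeas: "\<gamma> ` (S \<inter> cball x r) \<in> fmeasurable \<mu>" for r
    by (rule continuous_image_compact_fmeasurable[OF borel S(2)]) (auto intro: compact_Int_closed S(1))
  define A where "A n = \<gamma> ` (S \<inter> cball x (1 / Suc n))" for n
  have "decseq A"
    unfolding A_def by (intro decseq_SucI image_mono Int_mono subset_cball) (auto simp: frac_le)
  moreover have "(\<Inter>n. S \<inter> cball x (1 / Suc n)) = {x}"
  proof safe
    fix y assume "y \<in> (\<Inter>n. S \<inter> cball x (1 / Suc n))"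
    then have "dist x y \<le> 1 / Suc n" for n by auto
    then show "y = x"
      using nat_approx_posE[of "dist x y"] by (metis le_less_trans less_irrefl zero_less_dist_iff)
  qed (use \<open>x \<in> S\<close> in auto)
  then have "(\<Inter>n. A n) = {\<gamma> x}"
    unfolding A_def using \<open>inj_on \<gamma> S\<close> by (subst image_INT[symmetric]) auto
  moreover have "range A \<subseteq> sets \<mu>"
    unfolding A_def using fmeas by (auto intro: fmeasurableD)
  moreover have "emeasure \<mu> (A n) \<noteq> \<infinity>" for n
    unfolding A_def using fmeasurableD2[OF fmeas] by simp
  ultimately have "(\<lambda>n. measure \<mu> (A n)) \<longlonglongrightarrow> 0"
    using Lim_measure_decseq[of A \<mu>] non_atomic_measure_singleton[OF \<open>non_atomic \<mu>\<close>] by simp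
  show ?thesis
  proof (rule order_tendstoI)
    fix e :: real assume "0 < e"
    then obtain n where n: "measure \<mu> (A n) < e"
      using order_tendstoD(2)[OF \<open>(\<lambda>n. measure \<mu> (A n)) \<longlonglongrightarrow> 0\<close>]
      by (metis eventually_sequentially order_refl)
    have "\<forall>\<^sub>F r in at_right 0. r < 1 / Suc n"
      using eventually_at_right_real[of 0 "1 / Suc n"] by (auto elim: eventually_mono)
    then show "\<forall>\<^sub>F r in at_right 0. measure \<mu> (\<gamma> ` (S \<inter> cball x r)) < e"
    proof (rule eventually_mono)
      fix r :: real assume "r < 1 / Suc n"
      then have "measure \<mu> (\<gamma> ` (S \<inter> cball x r)) \<le> measure \<mu> (A n)"
        unfolding A_def using fmeas by (intro measure_mono_fmeasurable) auto
      then show "measure \<mu> (\<gamma> ` (S \<inter> cball x r)) < e" using n by linarith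
    qed
  qed (simp add: less_le_trans[OF _ measure_nonneg])
qed

lemma in_Gamma_image_fmeasurable:
  fixes \<mu> :: "'a::metric_space measure"
  assumes borel: "sets \<mu> = sets borel" and "non_atomic \<mu>" "in_Gamma \<mu> \<gamma> a b" "a \<le> c" "d \<le> b"
  shows "\<gamma> ` {c..d} \<in> fmeasurable \<mu>"
proof (rule fmeasurableI)
  have "continuous_on {a..b} \<gamma>"
    using assms(3) by (simp add: in_Gamma_def)
  then show "\<gamma> ` {c..d} \<in> sets \<mu>"
    using assms(4,5) by (intro continuous_image_compact_in_sets_borel[OF borel])
      (auto elim: continuous_on_subset)
  show "emeasure \<mu> (\<gamma> ` {c..d}) < \<infinity>"
  proof (cases "c < d")
    case True
    then show ?thesis using assms(3-5) by (simp add: in_Gamma_def)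
  next
    case False
    then have "{c..d} \<subseteq> {c}" by auto
    then have "\<gamma> ` {c..d} \<subseteq> {\<gamma> c}" by auto
    then have "emeasure \<mu> (\<gamma> ` {c..d}) \<le> emeasure \<mu> {\<gamma> c}"
      by (rule emeasure_mono) (simp add: borel)
    then show ?thesis
      using \<open>non_atomic \<mu>\<close> by (simp add: non_atomic_def)
  qed
qed

lemma in_Gamma_h_path_add:
  fixes \<mu> :: "'a::metric_space measure"
  assumes "sets \<mu> = sets borel" "non_atomic \<mu>" "in_Gamma \<mu> \<gamma> a b"
    and "a \<le> c" "c \<le> x" "x \<le> d" "d \<le> b"
  shows "h_path \<mu> \<gamma> c d = h_path \<mu> \<gamma> c x + h_path \<mu> \<gamma> x d"
  unfolding h_path_def
proof (rule measure_image_interval_split)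
  show "inj_on \<gamma> {c..d}"
    using assms(3-7) by (auto simp: in_Gamma_def elim: inj_on_subset)
qed (use assms in \<open>auto intro: in_Gamma_image_fmeasurable non_atomic_measure_singleton\<close>)

lemma in_Gamma_h_path_pos:
  fixes \<mu> :: "'a::metric_space measure"
  assumes "sets \<mu> = sets borel" "non_atomic \<mu>" "in_Gamma \<mu> \<gamma> a b" "a \<le> c" "c < d" "d \<le> b"
  shows "0 < h_path \<mu> \<gamma> c d"
proof -
  have "emeasure \<mu> (\<gamma> ` {c..d}) = ennreal (h_path \<mu> \<gamma> c d)"
    unfolding h_path_def using assms(1-4,6) by (intro emeasure_eq_measure2 in_Gamma_image_fmeasurable)
  moreover have "0 < emeasure \<mu> (\<gamma> ` {c..d})"
    using assms(3-6) by (simp add: in_Gamma_def)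
  ultimately show ?thesis by simp
qed

lemma in_Gamma_nu_path_strict_mono:
  fixes \<mu> :: "'a::metric_space measure"
  assumes "sets \<mu> = sets borel" "non_atomic \<mu>" "in_Gamma \<mu> \<gamma> a b"
  shows "strict_mono_on {a..b} (nu_path \<mu> \<gamma> a)"
proof (rule strict_mono_onI)
  fix x y assume "x \<in> {a..b}" "y \<in> {a..b}" "x < y"
  then show "nu_path \<mu> \<gamma> a x < nu_path \<mu> \<gamma> a y"
    using in_Gamma_h_path_add[OF assms, of a x y] in_Gamma_h_path_pos[OF assms, of x y]
    by (simp add: nu_path_def)
qed

lemma in_Gamma_nu_path_continuous:
  fixes \<mu> :: "'a::metric_space measure"
  assumes borel: "sets \<mu> = sets borel" and "non_atomic \<mu>" "in_Gamma \<mu> \<gamma> a b"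
  shows "continuous_on {a..b} (nu_path \<mu> \<gamma> a)"
proof -
  let ?nu = "nu_path \<mu> \<gamma> a"
  let ?J = "\<lambda>x r. \<gamma> ` ({a..b} \<inter> cball x r)"
  have Gamma: "continuous_on {a..b} \<gamma>" "inj_on \<gamma> {a..b}" "emeasure \<mu> (\<gamma> ` {a..b}) < \<infinity>"
    using assms(3) by (auto simp: in_Gamma_def)
  have bound: "\<bar>?nu y - ?nu x\<bar> \<le> measure \<mu> (?J x (dist y x))" if "x \<in> {a..b}" "y \<in> {a..b}" for x y
  proof -
    define l u where "l = min x y" and "u = max x y"
    have "\<bar>?nu y - ?nu x\<bar> = h_path \<mu> \<gamma> l u"
      using in_Gamma_h_path_add[OF assms, of a l u] that
      by (cases "x \<le> y") (auto simp: l_def u_def nu_path_def h_path_def)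
    also have "\<dots> \<le> measure \<mu> (?J x (dist y x))"
      unfolding h_path_def
    proof (rule measure_mono_fmeasurable)
      show "\<gamma> ` {l..u} \<subseteq> ?J x (dist y x)"
        using that by (intro image_mono) (auto simp: l_def u_def dist_real_def)
      show "\<gamma> ` {l..u} \<in> sets \<mu>"
        using that in_Gamma_image_fmeasurable[OF assms] by (auto simp: l_def u_def intro: fmeasurableD)
      show "?J x (dist y x) \<in> fmeasurable \<mu>"
        using in_Gamma_image_fmeasurable[OF assms order_refl order_refl]
        by (rule continuous_image_compact_fmeasurable[OF borel Gamma(1)]) (auto intro: compact_Int_closed)
    qed
    finally show ?thesis .
  qed
  show ?thesis
    unfolding continuous_on_def
  proof
    fix x assume x: "x \<in> {a..b}"
    have "filterlim (\<lambda>y. dist y x) (at_right 0) (at x within {a..b})"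
      unfolding filterlim_at
      by (auto simp: eventually_at_filter intro: tendsto_dist_iff[THEN iffD1] tendsto_ident_at)
    then have "((\<lambda>y. measure \<mu> (?J x (dist y x))) \<longlongrightarrow> 0) (at x within {a..b})"
      by (rule filterlim_compose[OF tendsto_measure_image_cball[OF borel \<open>non_atomic \<mu>\<close>
            compact_Icc Gamma x]])
    then have "((\<lambda>y. ?nu y - ?nu x) \<longlongrightarrow> 0) (at x within {a..b})"
      by (rule Lim_null_comparison[rotated]) (use bound x in \<open>auto simp: eventually_at_filter\<close>)
    then show "(?nu \<longlongrightarrow> ?nu x) (at x within {a..b})"
      by (simp add: LIM_zero_iff)
  qed
qed

theorem lemma2p1:
  fixes \<mu> :: "'a::metric_space measure" and \<gamma> :: "real \<Rightarrow> 'a" and a b :: real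
  assumes "sets \<mu> = sets borel"
    and "non_atomic \<mu>"
    and "in_Gamma \<mu> \<gamma> a b"
  shows "strict_mono_on {a..b} (nu_path \<mu> \<gamma> a)
    \<and> continuous_on {a..b} (nu_path \<mu> \<gamma> a)
    \<and> nu_path \<mu> \<gamma> a ` {a..b} = {0..h_path \<mu> \<gamma> a b}
    \<and> (\<forall>x\<in>{a..b}. h_path \<mu> \<gamma> a b = h_path \<mu> \<gamma> a x + h_path \<mu> \<gamma> x b)"
proof (intro conjI ballI)
  show mono: "strict_mono_on {a..b} (nu_path \<mu> \<gamma> a)"
    using assms by (rule in_Gamma_nu_path_strict_mono)
  show cont: "continuous_on {a..b} (nu_path \<mu> \<gamma> a)"
    using assms by (rule in_Gamma_nu_path_continuous)
  have "a \<le> b"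
    using assms(3) by (simp add: in_Gamma_def)
  moreover have "nu_path \<mu> \<gamma> a a = 0"
    using non_atomic_measure_singleton[OF assms(2)] by (simp add: nu_path_def h_path_def)
  ultimately show "nu_path \<mu> \<gamma> a ` {a..b} = {0..h_path \<mu> \<gamma> a b}"
    using continuous_mono_on_image_Icc[OF _ cont strict_mono_on_imp_mono_on[OF mono]]
    by (simp add: nu_path_def)
  show "h_path \<mu> \<gamma> a b = h_path \<mu> \<gamma> a x + h_path \<mu> \<gamma> x b" if "x \<in> {a..b}" for x
    using that by (intro in_Gamma_h_path_add[OF assms]) auto
qed

end
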